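(* If $x$ is a regular point of $V_{\bf f}$, i.e. $\operatorname{rank}(\mathrm{Jac}_{\bf f}(x))=\operatorname{codim}_x(V_{\bf f})$, then $\mathcal{R}^{ed}_{\bf f}$ contains an open neighborhood of $x$ in $\mathbb{R}^n$.
   Context: Let ${\bf f}=(f_1,\dots,f_m)$ with $f_i(x)=x^TA_ix+2a_i^Tx+\alpha_i$ ($A_i$ real symmetric $n\times n$, $a_i\in\mathbb{R}^n$, $\alpha_i\in\mathbb{R}$), $V_{\bf f}=\{x\in\mathbb{R}^n:f_i(x)=0\ \forall i\}$, and $\mathrm{Jac}_{\bf f}(x)$ the $n\times m$ Jacobian with $(i,j)$ entry $\partial f_j/\partial x_i$. The SDP-exact region of the Euclidean distance problem is $\mathcal{R}^{ed}_{\bf f}=\{u\in\mathbb{R}^n:\exists x\in V_{\bf f},\lambda\in\mathbb{R}^m \text{ with } I_n-\sum_i\lambda_iA_i\succ0 \text{ and } -u-\sum_i\lambda_ia_i+(I_n-\sum_i\lambda_iA_i)x=0\}$. *)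

theory Defs
  imports "HOL-Analysis.Analysis"
begin

definition quad :: "real^'n^'n \<Rightarrow> real^'n \<Rightarrow> real \<Rightarrow> real^'n \<Rightarrow> real" where
  "quad A a \<alpha> x = x \<bullet> (A *v x) + 2 * (a \<bullet> x) + \<alpha>"

definition fsys :: "('m \<Rightarrow> real^'n^'n) \<Rightarrow> ('m \<Rightarrow> real^'n) \<Rightarrow> ('m \<Rightarrow> real) \<Rightarrow> real^'n \<Rightarrow> real^'m" where
  "fsys A a \<alpha> x = (\<chi> i. quad (A i) (a i) (\<alpha> i) x)"

definition variety :: "('m \<Rightarrow> real^'n^'n) \<Rightarrow> ('m \<Rightarrow> real^'n) \<Rightarrow> ('m \<Rightarrow> real) \<Rightarrow> (real^'n) set" where
  "variety A a \<alpha> = {x. \<forall>i. quad (A i) (a i) (\<alpha> i) x = 0}"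

text \<open>n x m Jacobian: entry (k,j) = d f_j / d x_k (transpose of the library jacobian).\<close>
definition Jac :: "('m \<Rightarrow> real^'n^'n) \<Rightarrow> ('m \<Rightarrow> real^'n) \<Rightarrow> ('m \<Rightarrow> real) \<Rightarrow> real^'n \<Rightarrow> real^'m^'n" where
  "Jac A a \<alpha> x = transpose (jacobian (fsys A a \<alpha>) (at x))"

definition pos_def :: "real^'n^'n \<Rightarrow> bool" where
  "pos_def M \<longleftrightarrow> transpose M = M \<and> (\<forall>v. v \<noteq> 0 \<longrightarrow> v \<bullet> (M *v v) > 0)"

definition ed_region :: "('m::finite \<Rightarrow> real^'n^'n) \<Rightarrow> ('m \<Rightarrow> real^'n) \<Rightarrow> ('m \<Rightarrow> real) \<Rightarrow> (real^'n) set" where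
  "ed_region A a \<alpha> = {u. \<exists>x \<in> variety A a \<alpha>. \<exists>lam::'m \<Rightarrow> real.
      pos_def (mat 1 - (\<Sum>i\<in>UNIV. lam i *\<^sub>R A i)) \<and>
      - u - (\<Sum>i\<in>UNIV. lam i *\<^sub>R a i) + (mat 1 - (\<Sum>i\<in>UNIV. lam i *\<^sub>R A i)) *v x = 0}"

text \<open>Local dimension of a set V at a point x: the largest d such that every neighbourhood
  of x contains a subset of V homeomorphic to a nonempty open subset of a d-dimensional
  linear subspace (for semialgebraic sets this is the semialgebraic local dimension).\<close>
definition local_dim :: "(real^'n) set \<Rightarrow> real^'n \<Rightarrow> nat" where
  "local_dim V x = (GREATEST d. \<forall>e>0. \<exists>S \<subseteq> V \<inter> ball x e. \<exists>(W::(real^'n) set) T.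
      subspace W \<and> dim W = d \<and> openin (top_of_set W) T \<and> T \<noteq> {} \<and> T homeomorphic S)"

definition local_codim :: "(real^'n) set \<Rightarrow> real^'n \<Rightarrow> nat" where
  "local_codim V x = CARD('n) - local_dim V x"

end

theory Submission
  imports Defs "HOL-Complex_Analysis.Conformal_Mappings"
begin

(* Let g_i = A_i x + a_i (half the gradient of f_i at x), let T be the orthogonal complement
   of the g_i and P the orthogonal projection onto T. The chart Phi y = P y + sum_i f_i(y) g_i
   has injective derivative at x and maps V_f into T, so it has a local inverse Psi; we obtain
   it as the restriction of the holomorphic local inverse of the complexified chart, so that
   holomorphy can stand in for real analyticity.
   Regularity says dim T is the local dimension of V_f at x, so by invariance of domain Phi maps
   pieces of V_f arbitrarily close to x onto open subsets of T. Hence every f_i o Psi vanishes on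
   a nonempty open part of a ball in T, and by analytic continuation along complex lines on the
   whole ball: Psi maps a ball of T into V_f.
   For p near x put lambda_i(p) = g_i . (p - x), y = Psi (P p) and
   Theta p = y - sum_i lambda_i(p) (A_i y + a_i). Then u = Theta p satisfies the stationarity
   equation with multipliers lambda(p), which are small, so I - sum_i lambda_i A_i is positive
   definite. As Theta x = x and D Theta(x) = P - sum_i g_i g_i^T is invertible, the open
   mapping theorem shows that Theta covers a neighbourhood of x. *)

section \<open>Complexification of real vectors\<close>

definition of_real_vec :: "real^'n \<Rightarrow> complex^'n" where
  "of_real_vec y = (\<chi> k. complex_of_real (y$k))"

definition Re_vec :: "complex^'n \<Rightarrow> real^'n" where
  "Re_vec z = (\<chi> k. Re (z$k))"

definition Im_vec :: "complex^'n \<Rightarrow> real^'n" where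
  "Im_vec z = (\<chi> k. Im (z$k))"

definition cnj_vec :: "complex^'n \<Rightarrow> complex^'n" where
  "cnj_vec z = (\<chi> k. cnj (z$k))"

definition cinner :: "real^'n \<Rightarrow> complex^'n \<Rightarrow> complex" where
  "cinner e z = (\<Sum>k\<in>UNIV. complex_of_real (e$k) * z$k)"

lemma of_real_vec_add: "of_real_vec (x + y) = of_real_vec x + of_real_vec y"
  by (simp add: of_real_vec_def vec_eq_iff)

lemma of_real_vec_diff: "of_real_vec (x - y) = of_real_vec x - of_real_vec y"
  by (simp add: of_real_vec_def vec_eq_iff)

lemma of_real_vec_scaleR: "of_real_vec (c *\<^sub>R x) = complex_of_real c *s of_real_vec x"
  by (simp add: of_real_vec_def vec_eq_iff)

lemma of_real_vec_sum: "of_real_vec (sum f S) = (\<Sum>i\<in>S. of_real_vec (f i))"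
  by (simp add: of_real_vec_def vec_eq_iff)

lemma of_real_vec_0 [simp]: "of_real_vec 0 = 0"
  by (simp add: of_real_vec_def vec_eq_iff)

lemma Re_vec_of_real_vec [simp]: "Re_vec (of_real_vec x) = x"
  by (simp add: of_real_vec_def Re_vec_def vec_eq_iff)

lemma of_real_vec_eq_iff: "of_real_vec x = of_real_vec y \<longleftrightarrow> x = y"
  by (metis Re_vec_of_real_vec)

lemma Re_vec_Im_vec_decomp: "z = of_real_vec (Re_vec z) + \<i> *s of_real_vec (Im_vec z)"
  by (simp add: of_real_vec_def Re_vec_def Im_vec_def vec_eq_iff complex_eq_iff)

lemma Re_vec_combination: "Re_vec (of_real_vec u + \<i> *s of_real_vec w) = u"
  by (simp add: Re_vec_def of_real_vec_def vec_eq_iff)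

lemma Im_vec_combination: "Im_vec (of_real_vec u + \<i> *s of_real_vec w) = w"
  by (simp add: Im_vec_def of_real_vec_def vec_eq_iff)

lemma cnj_vec_of_real_vec [simp]: "cnj_vec (of_real_vec x) = of_real_vec x"
  by (simp add: of_real_vec_def cnj_vec_def vec_eq_iff)

lemma cnj_vec_eq_self_imp_real: "cnj_vec z = z \<Longrightarrow> z = of_real_vec (Re_vec z)"
  by (auto simp: cnj_vec_def of_real_vec_def Re_vec_def vec_eq_iff complex_eq_iff)

lemma cnj_vec_add: "cnj_vec (z + w) = cnj_vec z + cnj_vec w"
  by (simp add: cnj_vec_def vec_eq_iff)

lemma cnj_vec_diff: "cnj_vec (z - w) = cnj_vec z - cnj_vec w"
  by (simp add: cnj_vec_def vec_eq_iff)

lemma cnj_vec_sum: "cnj_vec (sum f S) = (\<Sum>i\<in>S. cnj_vec (f i))"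
  by (simp add: cnj_vec_def vec_eq_iff)

lemma cnj_vec_scale_of_real_vec: "cnj_vec (c *s of_real_vec e) = cnj c *s of_real_vec e"
  by (simp add: cnj_vec_def of_real_vec_def vec_eq_iff)

lemma norm_of_real_vec: "norm (of_real_vec x) = norm x"
  by (simp add: of_real_vec_def norm_vec_def L2_set_def)

lemma norm_cnj_vec: "norm (cnj_vec z) = norm z"
  by (simp add: cnj_vec_def norm_vec_def L2_set_def)

lemma dist_of_real_vec: "dist (of_real_vec u) (of_real_vec w) = dist u w"
  by (metis dist_norm norm_of_real_vec of_real_vec_diff)

lemma bounded_linear_of_real_vec: "bounded_linear of_real_vec"
  by (rule bounded_linearI'; auto simp add: of_real_vec_def vec_eq_iff complex_eq_iff)

lemma bounded_linear_Re_vec: "bounded_linear Re_vec"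
  by (rule bounded_linearI'; simp add: Re_vec_def vec_eq_iff)

lemma bounded_linear_cinner: "bounded_linear (cinner e)"
  unfolding cinner_def
  by (intro bounded_linear_sum bounded_linear_mult_right[THEN bounded_linear_compose]
      bounded_linear_vec_nth)

lemma scaleR_complex_vec: "c *\<^sub>R (z::complex^'n) = complex_of_real c *s z"
  by (simp add: vec_eq_iff) (simp add: scaleR_conv_of_real)

lemma complex_linear_imp_bounded_linear:
  fixes f :: "complex^'n \<Rightarrow> complex^'k"
  assumes "\<And>u v. f (u + v) = f u + f v" "\<And>c u. f (c *s u) = c *s f u"
  shows "bounded_linear f"
  by (rule bounded_linearI') (simp_all add: assms scaleR_complex_vec)

lemma bounded_linear_scale_vec: "bounded_linear (\<lambda>t::complex. t *s (v::complex^'n))"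
  by (rule bounded_linearI') (simp_all add: vec_eq_iff algebra_simps)

lemma line_vimage_ball:
  "{t::complex. u + t *s v \<in> ball z r} = (\<lambda>t. t *s v) -` ball (z - u) r"
  by (auto simp: dist_norm algebra_simps)

lemma open_line_vimage_ball: "open {t::complex. u + t *s (v::complex^'n) \<in> ball z r}"
  unfolding line_vimage_ball
  by (intro continuous_open_vimage open_ball linear_continuous_at bounded_linear_scale_vec)

lemma connected_line_vimage_ball: "connected {t::complex. u + t *s (v::complex^'n) \<in> ball z r}"
  unfolding line_vimage_ball
  by (intro convex_connected convex_linear_vimage convex_ball
      bounded_linear.linear[OF bounded_linear_scale_vec])

lemma islimpt_of_real_interval:
  assumes "c > 0" shows "0 islimpt (complex_of_real ` {0<..<c})"
  unfolding islimpt_approachable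
proof (intro allI impI)
  fix e :: real assume "e > 0"
  define s where "s = min c e / 2"
  have "0 < s" "s < c" "s < e" using assms \<open>e > 0\<close> by (auto simp: s_def)
  then show "\<exists>t\<in>complex_of_real ` {0<..<c}. t \<noteq> 0 \<and> dist t 0 < e"
    by (intro bexI[of _ "complex_of_real s"]) auto
qed

lemma cinner_scale: "cinner e (c *s h) = c * cinner e h"
  by (simp add: cinner_def sum_distrib_left algebra_simps)

lemma cinner_add: "cinner e (h + h') = cinner e h + cinner e h'"
  by (simp add: cinner_def sum.distrib algebra_simps)

lemma cinner_cnj_vec: "cinner e (cnj_vec z) = cnj (cinner e z)"
  by (simp add: cinner_def cnj_vec_def)

lemma cinner_of_real_vec: "cinner e (of_real_vec y) = complex_of_real (e \<bullet> y)"
  by (simp add: cinner_def of_real_vec_def inner_vec_def)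

section \<open>Quadrics and their complexification\<close>

definition quad_complex :: "real^'n^'n \<Rightarrow> real^'n \<Rightarrow> real \<Rightarrow> complex^'n \<Rightarrow> complex" where
  "quad_complex A a \<alpha> z = (\<Sum>k\<in>UNIV. z$k * cinner (A$k) z) + 2 * cinner a z + complex_of_real \<alpha>"

definition quad_complex_deriv :: "real^'n^'n \<Rightarrow> real^'n \<Rightarrow> complex^'n \<Rightarrow> complex^'n \<Rightarrow> complex" where
  "quad_complex_deriv A a z h =
     (\<Sum>k\<in>UNIV. h$k * cinner (A$k) z) + (\<Sum>k\<in>UNIV. z$k * cinner (A$k) h) + 2 * cinner a h"

lemma has_derivative_quad_complex:
  "(quad_complex A a \<alpha> has_derivative quad_complex_deriv A a z) (at z)"
proof -
  have lin: "((\<lambda>z. cinner e z) has_derivative cinner e) (at z)" for e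
    by (rule bounded_linear_imp_has_derivative[OF bounded_linear_cinner])
  have nth: "((\<lambda>z. z $ k) has_derivative (\<lambda>h. h $ k)) (at z)" for k
    by (rule bounded_linear_imp_has_derivative[OF bounded_linear_vec_nth])
  have "((\<lambda>z. (\<Sum>k\<in>UNIV. z$k * cinner (A$k) z) + (2 * cinner a z + complex_of_real \<alpha>))
      has_derivative (\<lambda>h. (\<Sum>k\<in>UNIV. z$k * cinner (A$k) h + h$k * cinner (A$k) z)
        + (2 * cinner a h + 0))) (at z)"
    by (intro has_derivative_add has_derivative_sum has_derivative_mult has_derivative_mult_right
        has_derivative_const lin nth)
  then show ?thesis
    by (simp add: quad_complex_def[abs_def] quad_complex_deriv_def[abs_def] sum.distrib
        algebra_simps)
qed

lemma quad_complex_deriv_scale: "quad_complex_deriv A a z (c *s h) = c * quad_complex_deriv A a z h"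
  by (simp add: quad_complex_deriv_def cinner_scale sum_distrib_left algebra_simps)

lemma quad_complex_deriv_add:
  "quad_complex_deriv A a z (h + h') = quad_complex_deriv A a z h + quad_complex_deriv A a z h'"
  by (simp add: quad_complex_deriv_def cinner_add sum.distrib algebra_simps)

lemma continuous_on_quad_complex_deriv: "continuous_on S (\<lambda>z. quad_complex_deriv A a z h)"
proof -
  have "continuous_on S (\<lambda>z. cinner e z)" for e
    by (rule linear_continuous_on[OF bounded_linear_cinner])
  moreover have "continuous_on S (\<lambda>z. z $ k)" for k
    by (rule linear_continuous_on[OF bounded_linear_vec_nth])
  ultimately show ?thesis
    unfolding quad_complex_deriv_def by (intro continuous_intros)
qed

lemma quad_complex_cnj_vec: "quad_complex A a \<alpha> (cnj_vec z) = cnj (quad_complex A a \<alpha> z)"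
  by (simp add: quad_complex_def cinner_cnj_vec) (simp add: cnj_vec_def)

lemma quad_complex_of_real_vec:
  "quad_complex A a \<alpha> (of_real_vec y) = complex_of_real (quad A a \<alpha> y)"
  by (simp add: quad_complex_def quad_def cinner_of_real_vec inner_vec_def
      matrix_vector_mult_def) (simp add: of_real_vec_def)

lemma quad_complex_deriv_of_real_vec:
  assumes sym: "transpose A = A"
  shows "quad_complex_deriv A a (of_real_vec x) (of_real_vec p)
    = complex_of_real (2 * ((A *v x + a) \<bullet> p))"
proof -
  have entry: "A$k$l = A$l$k" for k l
    by (metis sym transpose_def vec_lambda_beta)
  have swap: "(\<Sum>k\<in>UNIV. x$k * ((A$k) \<bullet> p)) = (\<Sum>k\<in>UNIV. p$k * ((A$k) \<bullet> x))"
    unfolding inner_vec_def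
    by (simp add: sum_distrib_left sum_distrib_right, subst sum.swap)
      (simp add: entry algebra_simps)
  have "quad_complex_deriv A a (of_real_vec x) (of_real_vec p)
    = complex_of_real ((\<Sum>k\<in>UNIV. p$k * ((A$k) \<bullet> x)) + (\<Sum>k\<in>UNIV. x$k * ((A$k) \<bullet> p))
        + 2 * (a \<bullet> p))"
    by (simp add: quad_complex_deriv_def cinner_of_real_vec) (simp add: of_real_vec_def)
  also have "\<dots> = complex_of_real (2 * ((A *v x + a) \<bullet> p))"
    by (simp add: swap inner_add_left)
      (simp add: inner_vec_def matrix_vector_mult_def algebra_simps sum_distrib_right)
  finally show ?thesis .
qed

lemma has_derivative_quad:
  assumes "transpose A = A"
  shows "(quad A a \<alpha> has_derivative (\<lambda>h. 2 * ((A *v x + a) \<bullet> h))) (at x)"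
proof -
  have "((\<lambda>y. Re (quad_complex A a \<alpha> (of_real_vec y))) has_derivative
      (\<lambda>h. Re (quad_complex_deriv A a (of_real_vec x) (of_real_vec h)))) (at x)"
    by (rule has_derivative_compose[OF has_derivative_compose[OF
          bounded_linear_imp_has_derivative[OF bounded_linear_of_real_vec]
          has_derivative_quad_complex] bounded_linear_imp_has_derivative[OF bounded_linear_Re]])
  then show ?thesis by (simp add: quad_complex_of_real_vec quad_complex_deriv_of_real_vec[OF assms])
qed

lemma has_derivative_vec_componentwise:
  fixes f :: "'a::real_normed_vector \<Rightarrow> real^'m"
  assumes "\<And>i. ((\<lambda>y. f y $ i) has_derivative (\<lambda>h. f' h $ i)) (at z)"
  shows "(f has_derivative f') (at z)"
proof -
  have "((\<lambda>y. f y \<bullet> b) has_derivative (\<lambda>h. f' h \<bullet> b)) (at z)" if "b \<in> Basis" for b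
  proof -
    obtain i where "b = axis i 1" using \<open>b \<in> Basis\<close> by (auto simp: Basis_vec_def)
    then show ?thesis using assms[of i] by (simp add: inner_axis)
  qed
  then show ?thesis using has_derivative_componentwise_within[of f f' z UNIV] by simp
qed

lemma matrix_vector_mult_sum_scaleR:
  "(\<Sum>i\<in>S. c i *\<^sub>R (M i :: real^'n^'k)) *v v = (\<Sum>i\<in>S. c i *\<^sub>R (M i *v v))"
  unfolding vec_eq_iff
  by (simp add: matrix_vector_mult_def sum_distrib_left sum_distrib_right mult.assoc sum.swap[of _ S])

lemma pos_def_identity_minus_small:
  fixes A :: "'m::finite \<Rightarrow> real^'n^'n"
  assumes sym: "\<And>i. transpose (A i) = A i"
  obtains \<eta> where "\<eta> > 0"
    "\<And>lam. (\<And>i. \<bar>lam i\<bar> < \<eta>) \<Longrightarrow> pos_def (mat 1 - (\<Sum>i\<in>UNIV. lam i *\<^sub>R A i))"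
proof -
  have "\<exists>K. \<forall>v. norm (A i *v v) \<le> norm v * K" for i
    using bounded_linear.bounded[OF matrix_vector_mul_bounded_linear[of "A i"]] by blast
  then obtain K where K: "\<And>i v. norm (A i *v v) \<le> norm v * K i" by metis
  define C where "C = (\<Sum>i\<in>UNIV. \<bar>K i\<bar>) + 1"
  have C: "C > 0" by (simp add: C_def add_nonneg_pos sum_nonneg)
  show thesis
  proof (rule that[of "1 / C"])
    show "1 / C > 0" using C by simp
    fix lam :: "'m \<Rightarrow> real" assume lam: "\<And>i. \<bar>lam i\<bar> < 1 / C"
    show "pos_def (mat 1 - (\<Sum>i\<in>UNIV. lam i *\<^sub>R A i))"
      unfolding pos_def_def
    proof (intro conjI allI impI)
      show "transpose (mat 1 - (\<Sum>i\<in>UNIV. lam i *\<^sub>R A i)) = mat 1 - (\<Sum>i\<in>UNIV. lam i *\<^sub>R A i)"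
        using sym by (simp add: vec_eq_iff transpose_def mat_def)
      fix v :: "real^'n" assume "v \<noteq> 0"
      have summand_bound: "\<bar>v \<bullet> (lam i *\<^sub>R (A i *v v))\<bar> \<le> 1 / C * \<bar>K i\<bar> * (norm v)^2" for i
      proof -
        have "\<bar>v \<bullet> (lam i *\<^sub>R (A i *v v))\<bar> \<le> \<bar>lam i\<bar> * (norm v * norm (A i *v v))"
          by (simp add: abs_mult mult_left_mono Cauchy_Schwarz_ineq2)
        also have "\<dots> \<le> 1 / C * (norm v * (norm v * \<bar>K i\<bar>))"
        proof -
          have "norm (A i *v v) \<le> norm v * \<bar>K i\<bar>"
            using K[of i v] by (meson abs_ge_self mult_left_mono norm_ge_zero order_trans)
          then show ?thesis using lam[of i] C by (intro mult_mono mult_left_mono) auto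
        qed
        finally show ?thesis by (simp add: power2_eq_square mult_ac)
      qed
      have "\<bar>\<Sum>i\<in>UNIV. v \<bullet> (lam i *\<^sub>R (A i *v v))\<bar> \<le> (\<Sum>i\<in>UNIV. 1 / C * \<bar>K i\<bar> * (norm v)^2)"
        by (intro order_trans[OF sum_abs] sum_mono summand_bound)
      also have "\<dots> = (C - 1) / C * (norm v)^2"
        by (simp add: C_def sum_distrib_left sum_distrib_right sum_divide_distrib mult_ac)
      also have "\<dots> < (norm v)^2"
        using C \<open>v \<noteq> 0\<close> by (simp add: divide_less_eq)
      finally have "\<bar>\<Sum>i\<in>UNIV. v \<bullet> (lam i *\<^sub>R (A i *v v))\<bar> < (norm v)^2" .
      moreover have "v \<bullet> ((mat 1 - (\<Sum>i\<in>UNIV. lam i *\<^sub>R A i)) *v v)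
          = (norm v)^2 - (\<Sum>i\<in>UNIV. v \<bullet> (lam i *\<^sub>R (A i *v v)))"
        by (simp add: matrix_vector_mult_diff_rdistrib
            matrix_vector_mult_sum_scaleR inner_diff_right inner_sum_right power2_norm_eq_inner)
      ultimately show "v \<bullet> ((mat 1 - (\<Sum>i\<in>UNIV. lam i *\<^sub>R A i)) *v v) > 0" by linarith
    qed
  qed
qed

section \<open>Local dimension\<close>

definition has_local_piece :: "(real^'n) set \<Rightarrow> real^'n \<Rightarrow> nat \<Rightarrow> bool" where
  "has_local_piece V x d \<longleftrightarrow> (\<forall>e>0. \<exists>S \<subseteq> V \<inter> ball x e. \<exists>(W::(real^'n) set) T.
      subspace W \<and> dim W = d \<and> openin (top_of_set W) T \<and> T \<noteq> {} \<and> T homeomorphic S)"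

lemma has_local_piece_0: "x \<in> V \<Longrightarrow> has_local_piece V x 0"
  unfolding has_local_piece_def
proof (intro allI impI)
  fix e :: real assume "x \<in> V" "e > 0"
  then have "{x} \<subseteq> V \<inter> ball x e" by simp
  moreover have "({0}::(real^'n) set) homeomorphic {x}" by (simp add: homeomorphic_finite)
  ultimately show "\<exists>S \<subseteq> V \<inter> ball x e. \<exists>(W::(real^'n) set) T.
      subspace W \<and> dim W = 0 \<and> openin (top_of_set W) T \<and> T \<noteq> {} \<and> T homeomorphic S"
    by (intro exI[of _ "{x}"] conjI exI[of _ "{0}"]) auto
qed

lemma has_local_piece_le_card:
  fixes V :: "(real^'n) set"
  assumes "has_local_piece V x d" shows "d \<le> CARD('n)"
proof -
  obtain W :: "(real^'n) set" where "dim W = d"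
    using assms zero_less_one unfolding has_local_piece_def by blast
  then show ?thesis using dim_subset_UNIV[of W] by simp
qed

lemma has_local_piece_local_dim:
  fixes V :: "(real^'n) set"
  assumes "x \<in> V" shows "has_local_piece V x (local_dim V x)"
proof -
  have "local_dim V x = (GREATEST d. has_local_piece V x d)"
    by (simp add: local_dim_def has_local_piece_def)
  then show ?thesis
    using GreatestI_nat[of "has_local_piece V x" 0 "CARD('n)"] has_local_piece_0[OF assms]
      has_local_piece_le_card by auto
qed

section \<open>A chart adapted to the variety at the point x\<close>

locale quad_chart =
  fixes A :: "'m::finite \<Rightarrow> real^'n^'n" and a :: "'m \<Rightarrow> real^'n" and \<alpha> :: "'m \<Rightarrow> real"
    and x :: "real^'n" and B :: "(real^'n) set"
  assumes symmetric: "\<And>i. transpose (A i) = A i"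
    and x_in_variety: "x \<in> variety A a \<alpha>"
    and span_B: "span B = span (range (\<lambda>i. A i *v x + a i))"
    and pairwise_orthogonal_B: "pairwise orthogonal B"
    and norm_B: "\<And>e. e \<in> B \<Longrightarrow> norm e = 1"
    and finite_B: "finite B"
begin

definition grad :: "'m \<Rightarrow> real^'n" where
  "grad i = A i *v x + a i"

definition tangent_space :: "(real^'n) set" where
  "tangent_space = {h. \<forall>i. grad i \<bullet> h = 0}"

definition proj :: "real^'n \<Rightarrow> real^'n" where
  "proj h = h - (\<Sum>e\<in>B. (e \<bullet> h) *\<^sub>R e)"

definition chart :: "real^'n \<Rightarrow> real^'n" where
  "chart y = proj y + (\<Sum>i\<in>UNIV. quad (A i) (a i) (\<alpha> i) y *\<^sub>R grad i)"

definition chart_deriv :: "real^'n \<Rightarrow> real^'n" where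
  "chart_deriv p = proj p + (\<Sum>i\<in>UNIV. (2 * (grad i \<bullet> p)) *\<^sub>R grad i)"

definition proj_complex :: "complex^'n \<Rightarrow> complex^'n" where
  "proj_complex z = z - (\<Sum>e\<in>B. cinner e z *s of_real_vec e)"

definition chart_complex :: "complex^'n \<Rightarrow> complex^'n" where
  "chart_complex z = proj_complex z
     + (\<Sum>i\<in>UNIV. quad_complex (A i) (a i) (\<alpha> i) z *s of_real_vec (grad i))"

definition chart_complex_deriv :: "complex^'n \<Rightarrow> complex^'n \<Rightarrow> complex^'n" where
  "chart_complex_deriv z h = proj_complex h
     + (\<Sum>i\<in>UNIV. quad_complex_deriv (A i) (a i) z h *s of_real_vec (grad i))"

lemma span_B_grad: "span B = span (range grad)"
  using span_B by (simp add: grad_def[abs_def])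

lemma subspace_tangent_space: "subspace tangent_space"
  by (simp add: subspace_def tangent_space_def inner_add_right)

lemma bounded_linear_proj: "bounded_linear proj"
  by (rule bounded_linearI')
    (simp_all add: proj_def inner_add_right scaleR_add_left sum.distrib scaleR_diff_right
      scaleR_sum_right)

lemma inner_B_proj:
  assumes e: "e \<in> B" shows "e \<bullet> proj h = 0"
proof -
  have "(\<Sum>e'\<in>B. (e' \<bullet> h) * (e \<bullet> e'))
      = (e \<bullet> h) * (e \<bullet> e) + (\<Sum>e'\<in>B-{e}. (e' \<bullet> h) * (e \<bullet> e'))"
    using e finite_B by (simp add: sum.remove)
  also have "(\<Sum>e'\<in>B-{e}. (e' \<bullet> h) * (e \<bullet> e')) = 0"
    using e pairwise_orthogonal_B by (intro sum.neutral) (auto simp: pairwise_def orthogonal_def)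
  also have "e \<bullet> e = 1" using norm_B[OF e] by (simp add: dot_square_norm)
  finally show ?thesis by (simp add: proj_def inner_diff_right inner_sum_right)
qed

lemma inner_grad_proj: "grad i \<bullet> proj h = 0"
proof -
  have "grad i \<in> span B" by (simp add: span_B_grad span_base)
  then have "orthogonal (proj h) (grad i)"
    by (rule orthogonal_to_span) (simp add: orthogonal_def inner_B_proj inner_commute)
  then show ?thesis by (simp add: orthogonal_def inner_commute)
qed

lemma proj_in_tangent_space: "proj h \<in> tangent_space"
  by (simp add: tangent_space_def inner_grad_proj)

lemma proj_tangent:
  assumes "h \<in> tangent_space" shows "proj h = h"
proof -
  have "e \<bullet> h = 0" if "e \<in> B" for e
  proof -
    have "e \<in> span (range grad)" using that by (metis span_B_grad span_base)
    then have "orthogonal h e"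
      by (rule orthogonal_to_span)
        (use assms in \<open>auto simp: orthogonal_def tangent_space_def inner_commute[of h]\<close>)
    then show ?thesis by (simp add: orthogonal_def inner_commute)
  qed
  then show ?thesis by (simp add: proj_def)
qed

lemma chart_in_variety: "y \<in> variety A a \<alpha> \<Longrightarrow> chart y = proj y"
  by (simp add: chart_def variety_def)

lemma chart_deriv_tangent: "h \<in> tangent_space \<Longrightarrow> chart_deriv h = h"
  by (simp add: chart_deriv_def tangent_space_def proj_tangent)

text \<open>This covers the derivative of the chart at x (c = 2) and that of ed_param at x (c = -1).\<close>
lemma proj_plus_grad_eq_0:
  assumes "c \<noteq> 0" and "proj p + (\<Sum>i\<in>UNIV. (c * (grad i \<bullet> p)) *\<^sub>R grad i) = 0"
  shows "p = 0"
proof -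
  define G where "G = (\<Sum>i\<in>UNIV. (c * (grad i \<bullet> p)) *\<^sub>R grad i)"
  have "proj p \<bullet> grad i = 0" for i by (metis inner_commute inner_grad_proj)
  then have "proj p \<bullet> G = 0" by (simp add: G_def inner_sum_right)
  moreover have proj_G: "proj p = - G" using assms(2) by (simp add: G_def eq_neg_iff_add_eq_0)
  ultimately have proj_0: "proj p = 0" by simp
  have "c * (\<Sum>i\<in>UNIV. (grad i \<bullet> p)^2) = p \<bullet> G"
    by (simp add: G_def inner_sum_right inner_commute power2_eq_square sum_distrib_left mult_ac)
  also have "\<dots> = 0" using proj_G proj_0 by simp
  finally have "\<forall>i\<in>UNIV. (grad i \<bullet> p)^2 = 0"
    using assms(1) by (subst sum_nonneg_eq_0_iff[symmetric]) auto
  then have "proj p = p" by (intro proj_tangent) (simp add: tangent_space_def)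
  then show ?thesis using proj_0 by simp
qed

lemma chart_deriv_eq_0: "chart_deriv p = 0 \<Longrightarrow> p = 0"
  using proj_plus_grad_eq_0[of 2 p] by (simp add: chart_deriv_def)

lemma proj_complex_of_real_vec: "proj_complex (of_real_vec p) = of_real_vec (proj p)"
  by (simp add: proj_complex_def proj_def of_real_vec_diff of_real_vec_sum of_real_vec_scaleR
      cinner_of_real_vec)

lemma chart_complex_of_real_vec: "chart_complex (of_real_vec y) = of_real_vec (chart y)"
  by (simp add: chart_complex_def chart_def proj_complex_of_real_vec of_real_vec_add
      of_real_vec_sum of_real_vec_scaleR quad_complex_of_real_vec)

lemma chart_complex_deriv_of_real_vec:
  "chart_complex_deriv (of_real_vec x) (of_real_vec p) = of_real_vec (chart_deriv p)"
  by (simp add: chart_complex_deriv_def chart_deriv_def proj_complex_of_real_vec of_real_vec_add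
      of_real_vec_sum of_real_vec_scaleR quad_complex_deriv_of_real_vec[OF symmetric] grad_def)

lemma chart_complex_cnj_vec: "chart_complex (cnj_vec z) = cnj_vec (chart_complex z)"
  by (simp add: chart_complex_def proj_complex_def cnj_vec_add cnj_vec_diff cnj_vec_sum
      cnj_vec_scale_of_real_vec cinner_cnj_vec quad_complex_cnj_vec)

lemma chart_complex_deriv_scale:
  "chart_complex_deriv z (c *s h) = c *s chart_complex_deriv z h"
  by (simp add: chart_complex_deriv_def proj_complex_def quad_complex_deriv_scale cinner_scale
      vec_eq_iff sum_distrib_left algebra_simps)

lemma chart_complex_deriv_add:
  "chart_complex_deriv z (u + v) = chart_complex_deriv z u + chart_complex_deriv z v"
  by (simp add: chart_complex_deriv_def proj_complex_def quad_complex_deriv_add cinner_add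
      vec_eq_iff sum.distrib algebra_simps)

lemma bounded_linear_chart_complex_deriv: "bounded_linear (chart_complex_deriv z)"
  by (rule complex_linear_imp_bounded_linear)
    (simp_all add: chart_complex_deriv_add chart_complex_deriv_scale)

lemma bounded_linear_proj_complex: "bounded_linear proj_complex"
  by (rule complex_linear_imp_bounded_linear)
    (simp_all add: proj_complex_def cinner_add cinner_scale vec_eq_iff
      sum.distrib sum_distrib_left algebra_simps)

lemma has_derivative_chart_complex:
  "(chart_complex has_derivative chart_complex_deriv z) (at z)"
  unfolding chart_complex_def[abs_def] chart_complex_deriv_def[abs_def]
  by (intro has_derivative_add has_derivative_sum
      bounded_linear_imp_has_derivative[OF bounded_linear_proj_complex]
      bounded_linear.has_derivative[OF bounded_linear_scale_vec] has_derivative_quad_complex)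

lemma continuous_on_chart: "continuous_on S chart"
proof -
  have "continuous_on UNIV chart_complex"
    using has_derivative_chart_complex
    by (intro has_derivative_continuous_on) (blast intro: has_derivative_at_withinI)
  then have "continuous_on S (\<lambda>y. Re_vec (chart_complex (of_real_vec y)))"
    by (intro continuous_on_compose2[OF linear_continuous_on[OF bounded_linear_Re_vec]]
        continuous_on_compose2[OF _ linear_continuous_on[OF bounded_linear_of_real_vec]]) auto
  then show ?thesis by (simp add: chart_complex_of_real_vec)
qed

lemma continuous_on_chart_complex_deriv: "continuous_on S (\<lambda>z. chart_complex_deriv z h)"
proof -
  have "continuous_on S (\<lambda>z. quad_complex_deriv (A i) (a i) z h *s v)"
    for i and v :: "complex^'n"
    by (rule continuous_on_compose2[OF linear_continuous_on[OF bounded_linear_scale_vec]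
          continuous_on_quad_complex_deriv]) auto
  then show ?thesis
    unfolding chart_complex_deriv_def by (intro continuous_intros)
qed

lemma chart_complex_deriv_x_eq_0:
  assumes "chart_complex_deriv (of_real_vec x) h = 0" shows "h = 0"
proof -
  have "chart_complex_deriv (of_real_vec x) h
      = of_real_vec (chart_deriv (Re_vec h)) + \<i> *s of_real_vec (chart_deriv (Im_vec h))"
    by (subst Re_vec_Im_vec_decomp[of h])
      (simp add: chart_complex_deriv_add chart_complex_deriv_scale chart_complex_deriv_of_real_vec)
  then have "chart_deriv (Re_vec h) = Re_vec (chart_complex_deriv (of_real_vec x) h)"
      "chart_deriv (Im_vec h) = Im_vec (chart_complex_deriv (of_real_vec x) h)"
    by (simp_all add: Re_vec_combination Im_vec_combination)
  then have "chart_deriv (Re_vec h) = 0" "chart_deriv (Im_vec h) = 0"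
    using assms by (simp_all add: Re_vec_def Im_vec_def vec_eq_iff)
  then have "Re_vec h = 0" "Im_vec h = 0" by (auto intro: chart_deriv_eq_0)
  then show ?thesis by (subst Re_vec_Im_vec_decomp) simp
qed

end

section \<open>The inverse of the chart\<close>

locale quad_chart_inverse = quad_chart A a \<alpha> x B
  for A :: "'m::finite \<Rightarrow> real^'n^'n" and a \<alpha> x B +
  fixes \<rho> \<delta> :: real and \<psi> :: "complex^'n \<Rightarrow> complex^'n"
    and \<psi>' :: "complex^'n \<Rightarrow> complex^'n \<Rightarrow> complex^'n"
  assumes rho_pos: "\<rho> > 0" and delta_pos: "\<delta> > 0"
    and inj_on_chart_complex: "inj_on chart_complex (ball (of_real_vec x) \<rho>)"
    and psi_right_inverse: "\<And>w. w \<in> ball (of_real_vec (proj x)) \<delta> \<Longrightarrow>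
      \<psi> w \<in> ball (of_real_vec x) \<rho> \<and> chart_complex (\<psi> w) = w"
    and psi_left_inverse: "\<And>z. z \<in> ball (of_real_vec x) \<rho> \<Longrightarrow>
      chart_complex z \<in> ball (of_real_vec (proj x)) \<delta> \<Longrightarrow> \<psi> (chart_complex z) = z"
    and has_derivative_psi: "\<And>w. w \<in> ball (of_real_vec (proj x)) \<delta> \<Longrightarrow>
      (\<psi> has_derivative \<psi>' w) (at w)"
    and psi'_right_inverse: "\<And>w h. w \<in> ball (of_real_vec (proj x)) \<delta> \<Longrightarrow>
      chart_complex_deriv (\<psi> w) (\<psi>' w h) = h"
    and psi'_left_inverse: "\<And>w h. w \<in> ball (of_real_vec (proj x)) \<delta> \<Longrightarrow>
      \<psi>' w (chart_complex_deriv (\<psi> w) h) = h"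

lemma (in quad_chart) chart_complex_inverse_function:
  obtains U V \<psi> \<psi>' where "open U" "of_real_vec x \<in> U" "open V"
    "homeomorphism U V chart_complex \<psi>"
    "\<And>w. w \<in> V \<Longrightarrow> (\<psi> has_derivative \<psi>' w) (at w)"
    "\<And>w h. w \<in> V \<Longrightarrow> chart_complex_deriv (\<psi> w) (\<psi>' w h) = h"
    "\<And>w h. w \<in> V \<Longrightarrow> \<psi>' w (chart_complex_deriv (\<psi> w) h) = h"
proof -
  define f' where "f' z = Blinfun (chart_complex_deriv z)" for z
  have f': "blinfun_apply (f' z) = chart_complex_deriv z" for z
    by (simp add: f'_def bounded_linear_Blinfun_apply bounded_linear_chart_complex_deriv)
  have cont_f': "continuous_on UNIV f'"
    by (rule continuous_on_blinfun_componentwise)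
      (simp add: f' continuous_on_chart_complex_deriv)
  define D0 where "D0 = chart_complex_deriv (of_real_vec x)"
  have "inj D0"
    unfolding D0_def
    by (rule linear_inj_on_iff_eq_0[THEN iffD2, of _ UNIV, simplified])
      (auto intro: bounded_linear.linear bounded_linear_chart_complex_deriv
        chart_complex_deriv_x_eq_0)
  moreover have "bounded_linear (inv D0)"
    by (rule inj_linear_imp_inv_bounded_linear[OF _ \<open>inj D0\<close>])
      (simp add: D0_def bounded_linear_chart_complex_deriv)
  ultimately have "Blinfun (inv D0) o\<^sub>L f' (of_real_vec x) = id_blinfun"
    by (intro blinfun_eqI) (simp add: f' bounded_linear_Blinfun_apply inv_f_f flip: D0_def)
  moreover have "(chart_complex has_derivative blinfun_apply (f' z)) (at z)" for z
    by (simp add: f' has_derivative_chart_complex)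
  ultimately obtain U V \<psi> \<psi>' where "open U" "of_real_vec x \<in> U" "open V"
      and hom: "homeomorphism U V chart_complex \<psi>"
      and der: "\<And>y. y \<in> V \<Longrightarrow> (\<psi> has_derivative (\<psi>' y)) (at y)"
      and inv: "\<And>y. y \<in> V \<Longrightarrow> \<psi>' y = inv (blinfun_apply (f' (\<psi> y)))"
      and bij: "\<And>y. y \<in> V \<Longrightarrow> bij (blinfun_apply (f' (\<psi> y)))"
    using inverse_function_theorem[OF open_UNIV _ cont_f' UNIV_I] by metis
  show thesis
  proof (rule that[OF \<open>open U\<close> \<open>of_real_vec x \<in> U\<close> \<open>open V\<close> hom der])
    show "chart_complex_deriv (\<psi> w) (\<psi>' w h) = h" if "w \<in> V" for w h
      using inv[OF that] bij[OF that] by (simp add: f' bij_is_surj surj_f_inv_f)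
    show "\<psi>' w (chart_complex_deriv (\<psi> w) h) = h" if "w \<in> V" for w h
      using inv[OF that] bij[OF that] by (simp add: f' bij_is_inj inv_f_f)
  qed
qed

lemma (in quad_chart) quad_chart_inverse_exists:
  obtains \<rho> \<delta> \<psi> \<psi>' where "quad_chart_inverse A a \<alpha> x B \<rho> \<delta> \<psi> \<psi>'"
proof -
  obtain U V \<psi> \<psi>' where "open U" "of_real_vec x \<in> U" "open V"
      and hom: "homeomorphism U V chart_complex \<psi>"
      and der: "\<And>w. w \<in> V \<Longrightarrow> (\<psi> has_derivative \<psi>' w) (at w)"
      and right_inv: "\<And>w h. w \<in> V \<Longrightarrow> chart_complex_deriv (\<psi> w) (\<psi>' w h) = h"
      and left_inv: "\<And>w h. w \<in> V \<Longrightarrow> \<psi>' w (chart_complex_deriv (\<psi> w) h) = h"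
    by (rule chart_complex_inverse_function) blast
  obtain \<rho> where "\<rho> > 0" and \<rho>: "ball (of_real_vec x) \<rho> \<subseteq> U"
    using \<open>open U\<close> \<open>of_real_vec x \<in> U\<close> open_contains_ball by blast
  have "openin (top_of_set V) (chart_complex ` ball (of_real_vec x) \<rho>)"
    by (rule homeomorphism_imp_open_map[OF hom])
      (use \<rho> \<open>open U\<close> in \<open>simp add: openin_open_eq\<close>)
  then have "open (chart_complex ` ball (of_real_vec x) \<rho>)"
    using \<open>open V\<close> openin_open_trans by blast
  moreover have "of_real_vec (proj x) \<in> chart_complex ` ball (of_real_vec x) \<rho>"
    using \<open>\<rho> > 0\<close> x_in_variety
    by (metis centre_in_ball imageI chart_complex_of_real_vec chart_in_variety)
  ultimately obtain \<delta> where "\<delta> > 0"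
      and \<delta>: "ball (of_real_vec (proj x)) \<delta> \<subseteq> chart_complex ` ball (of_real_vec x) \<rho>"
    using open_contains_ball by blast
  have "chart_complex ` ball (of_real_vec x) \<rho> \<subseteq> V"
    using hom \<rho> by (auto simp: homeomorphism_def)
  with \<delta> have V: "w \<in> V" if "w \<in> ball (of_real_vec (proj x)) \<delta>" for w
    using that by blast
  have "quad_chart_inverse A a \<alpha> x B \<rho> \<delta> \<psi> \<psi>'"
  proof (intro quad_chart_inverse.intro quad_chart_axioms quad_chart_inverse_axioms.intro)
    show "inj_on chart_complex (ball (of_real_vec x) \<rho>)"
      using hom \<rho> by (metis homeomorphism_apply1 inj_on_inverseI subsetD)
    show "\<psi> w \<in> ball (of_real_vec x) \<rho> \<and> chart_complex (\<psi> w) = w"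
      if w: "w \<in> ball (of_real_vec (proj x)) \<delta>" for w
    proof -
      obtain z where z: "z \<in> ball (of_real_vec x) \<rho>" "w = chart_complex z" using w \<delta> by blast
      then have "\<psi> w = z" using \<rho> hom by (metis homeomorphism_apply1 subsetD)
      then show ?thesis using z by simp
    qed
    show "\<psi> (chart_complex z) = z" if "z \<in> ball (of_real_vec x) \<rho>" for z
      using that \<rho> hom by (metis homeomorphism_apply1 subsetD)
    show "(\<psi> has_derivative \<psi>' w) (at w)" if "w \<in> ball (of_real_vec (proj x)) \<delta>" for w
      using der V that by blast
    show "chart_complex_deriv (\<psi> w) (\<psi>' w h) = h" if "w \<in> ball (of_real_vec (proj x)) \<delta>" for w h
      using right_inv V that by blast
    show "\<psi>' w (chart_complex_deriv (\<psi> w) h) = h" if "w \<in> ball (of_real_vec (proj x)) \<delta>" for w h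
      using left_inv V that by blast
  qed (fact \<open>\<rho> > 0\<close> \<open>\<delta> > 0\<close>)+
  then show thesis by (rule that)
qed

context quad_chart_inverse
begin

definition chart_inv :: "real^'n \<Rightarrow> real^'n" where
  "chart_inv w = Re_vec (\<psi> (of_real_vec w))"

text \<open>The complex inverse maps real points to real points, since the chart commutes with
  conjugation and is injective.\<close>
lemma psi_of_real_vec:
  assumes w: "w \<in> ball (proj x) \<delta>" shows "\<psi> (of_real_vec w) = of_real_vec (chart_inv w)"
proof -
  have w': "of_real_vec w \<in> ball (of_real_vec (proj x)) \<delta>"
    using w by (simp add: dist_of_real_vec)
  define z where "z = \<psi> (of_real_vec w)"
  have z: "z \<in> ball (of_real_vec x) \<rho>" "chart_complex z = of_real_vec w"
    using psi_right_inverse[OF w'] by (auto simp: z_def)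
  have "cnj_vec z \<in> ball (of_real_vec x) \<rho>"
    using z(1) by (simp add: dist_norm) (metis cnj_vec_of_real_vec cnj_vec_diff norm_cnj_vec)
  moreover have "chart_complex (cnj_vec z) = chart_complex z"
    by (simp add: chart_complex_cnj_vec z(2))
  ultimately have "cnj_vec z = z" using inj_on_chart_complex z(1) by (meson inj_onD)
  then show ?thesis unfolding chart_inv_def z_def[symmetric] by (rule cnj_vec_eq_self_imp_real)
qed

lemma chart_inv_chart:
  assumes "y \<in> ball x \<rho>" "chart y \<in> ball (proj x) \<delta>" shows "chart_inv (chart y) = y"
  using psi_left_inverse[of "of_real_vec y"] assms
  by (simp add: chart_inv_def dist_of_real_vec chart_complex_of_real_vec)

lemma chart_inv_proj_x: "chart_inv (proj x) = x"
  using chart_inv_chart[of x] rho_pos delta_pos x_in_variety by (simp add: chart_in_variety)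

lemma inj_on_chart: "inj_on chart (ball x \<rho>)"
proof (rule inj_onI)
  fix y z assume "y \<in> ball x \<rho>" "z \<in> ball x \<rho>" "chart y = chart z"
  then have "chart_complex (of_real_vec y) = chart_complex (of_real_vec z)"
    "of_real_vec y \<in> ball (of_real_vec x) \<rho>" "of_real_vec z \<in> ball (of_real_vec x) \<rho>"
    by (simp_all add: chart_complex_of_real_vec dist_of_real_vec)
  then show "y = z" using inj_on_chart_complex by (meson inj_onD of_real_vec_eq_iff)
qed

lemma continuous_on_chart_inv: "continuous_on (ball (proj x) \<delta>) chart_inv"
proof -
  have "continuous_on (ball (of_real_vec (proj x)) \<delta>) \<psi>"
    by (rule has_derivative_continuous_on[of _ _ \<psi>'])
      (blast intro: has_derivative_at_withinI has_derivative_psi)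
  then have "continuous_on (ball (proj x) \<delta>) (\<lambda>w. Re_vec (\<psi> (of_real_vec w)))"
    by (intro continuous_on_compose2[OF linear_continuous_on[OF bounded_linear_Re_vec]]
        continuous_on_compose2[OF _ linear_continuous_on[OF bounded_linear_of_real_vec]])
      (auto simp: dist_of_real_vec)
  then show ?thesis by (simp add: chart_inv_def[abs_def])
qed

lemma psi'_scale:
  assumes "w \<in> ball (of_real_vec (proj x)) \<delta>" shows "\<psi>' w (c *s u) = c *s \<psi>' w u"
proof -
  have "\<psi>' w (c *s u) = \<psi>' w (c *s chart_complex_deriv (\<psi> w) (\<psi>' w u))"
    by (simp add: psi'_right_inverse[OF assms])
  also have "\<dots> = \<psi>' w (chart_complex_deriv (\<psi> w) (c *s \<psi>' w u))"
    by (simp add: chart_complex_deriv_scale)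
  also have "\<dots> = c *s \<psi>' w u" by (simp add: psi'_left_inverse[OF assms])
  finally show ?thesis .
qed

lemma holomorphic_quad_psi_line:
  assumes "\<And>t. t \<in> D \<Longrightarrow> c + t *s v \<in> ball (of_real_vec (proj x)) \<delta>"
  shows "(\<lambda>t. quad_complex (A i) (a i) (\<alpha> i) (\<psi> (c + t *s v))) holomorphic_on D"
  unfolding holomorphic_on_def field_differentiable_def
proof
  fix t assume t: "t \<in> D"
  define w where "w = c + t *s v"
  have w: "w \<in> ball (of_real_vec (proj x)) \<delta>" using assms[OF t] by (simp add: w_def)
  have "((\<lambda>t. c + t *s v) has_derivative (\<lambda>s. s *s v)) (at t)"
    using has_derivative_add[OF has_derivative_const
        bounded_linear_imp_has_derivative[OF bounded_linear_scale_vec]] by simp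
  then have "((\<lambda>t. quad_complex (A i) (a i) (\<alpha> i) (\<psi> (c + t *s v))) has_derivative
      (\<lambda>s. quad_complex_deriv (A i) (a i) (\<psi> w) (\<psi>' w (s *s v)))) (at t)"
    using has_derivative_compose[OF has_derivative_compose has_derivative_quad_complex]
      has_derivative_psi[OF w] by (simp add: w_def)
  moreover have "(\<lambda>s. quad_complex_deriv (A i) (a i) (\<psi> w) (\<psi>' w (s *s v)))
      = (*) (quad_complex_deriv (A i) (a i) (\<psi> w) (\<psi>' w v))"
    by (rule ext) (simp add: psi'_scale[OF w] quad_complex_deriv_scale mult.commute)
  ultimately show "\<exists>f'. ((\<lambda>t. quad_complex (A i) (a i) (\<alpha> i) (\<psi> (c + t *s v)))
      has_field_derivative f') (at t within D)"
    by (metis has_field_derivative_at_within has_field_derivative_def)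
qed

text \<open>Analytic continuation along the complex line through w1 and w.\<close>
lemma chart_inv_in_variety_extend:
  assumes w1: "w1 \<in> tangent_space" and "\<epsilon> > 0" and sub: "ball w1 \<epsilon> \<subseteq> ball (proj x) \<delta>"
    and near_w1: "\<And>w. w \<in> tangent_space \<Longrightarrow> w \<in> ball w1 \<epsilon> \<Longrightarrow> chart_inv w \<in> variety A a \<alpha>"
    and w: "w \<in> tangent_space" "w \<in> ball (proj x) \<delta>"
  shows "chart_inv w \<in> variety A a \<alpha>"
proof -
  define v where "v = w - w1"
  have w1_ball: "w1 \<in> ball (proj x) \<delta>" using sub \<open>\<epsilon> > 0\<close> by (meson centre_in_ball subsetD)
  have line: "of_real_vec w1 + complex_of_real s *s of_real_vec v = of_real_vec (w1 + s *\<^sub>R v)"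
    for s by (simp add: of_real_vec_add of_real_vec_scaleR)
  have "quad (A i) (a i) (\<alpha> i) (chart_inv w) = 0" for i
  proof -
    define D where "D = {t::complex. of_real_vec w1 + t *s of_real_vec v \<in> ball (of_real_vec (proj x)) \<delta>}"
    define \<phi> where "\<phi> t = quad_complex (A i) (a i) (\<alpha> i) (\<psi> (of_real_vec w1 + t *s of_real_vec v))" for t
    have hol: "\<phi> holomorphic_on D"
      unfolding \<phi>_def by (rule holomorphic_quad_psi_line) (simp add: D_def)
    have open_D: "open D" and connected_D: "connected D"
      unfolding D_def by (rule open_line_vimage_ball connected_line_vimage_ball)+
    have "0 \<in> D"
      using w1_ball by (simp add: D_def dist_of_real_vec)
    have "1 \<in> D"
      using w(2) by (simp add: D_def v_def flip: of_real_vec_add) (simp add: dist_of_real_vec)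
    define c where "c = \<epsilon> / (norm v + 1)"
    have "c > 0" using \<open>\<epsilon> > 0\<close> by (simp add: c_def add_nonneg_pos)
    define U where "U = complex_of_real ` {0<..<c}"
    have limpt: "0 islimpt U"
      unfolding U_def using \<open>c > 0\<close> by (rule islimpt_of_real_interval)
    have U: "t \<in> D \<and> \<phi> t = 0" if t: "t \<in> U" for t
    proof -
      obtain s where s: "t = complex_of_real s" "0 < s" "s < c" using t by (auto simp: U_def)
      have "norm (s *\<^sub>R v) \<le> c * norm v" using s by (simp add: mult_right_mono)
      also have "\<dots> < \<epsilon>"
      proof -
        have "0 < 1 + norm v" by (simp add: add_pos_nonneg)
        moreover have "\<epsilon> * norm v < \<epsilon> * (1 + norm v)" using \<open>\<epsilon> > 0\<close> by simp
        ultimately show ?thesis by (simp add: c_def field_simps)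
      qed
      finally have "w1 + s *\<^sub>R v \<in> ball w1 \<epsilon>" by (simp add: dist_norm)
      moreover have "w1 + s *\<^sub>R v \<in> tangent_space"
        using w1 w by (simp add: tangent_space_def v_def inner_add_right inner_diff_right)
      ultimately have "chart_inv (w1 + s *\<^sub>R v) \<in> variety A a \<alpha>" "w1 + s *\<^sub>R v \<in> ball (proj x) \<delta>"
        using near_w1 sub by auto
      then show ?thesis
        by (simp add: D_def \<phi>_def s(1) line dist_of_real_vec psi_of_real_vec
            quad_complex_of_real_vec variety_def)
    qed
    have "\<phi> 1 = 0"
      by (rule analytic_continuation[OF hol open_D connected_D _ \<open>0 \<in> D\<close> limpt _ \<open>1 \<in> D\<close>])
        (use U in auto)
    then show ?thesis
      using w by (simp add: \<phi>_def v_def flip: of_real_vec_add)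
        (simp add: psi_of_real_vec quad_complex_of_real_vec)
  qed
  then show ?thesis by (simp add: variety_def)
qed

lemma openin_chart_image:
  fixes W :: "'a::euclidean_space set"
  assumes S: "S \<subseteq> variety A a \<alpha> \<inter> ball x \<rho>"
    and W: "subspace W" "dim tangent_space \<le> dim W" "openin (top_of_set W) T"
    and hom: "homeomorphism T S h k"
  shows "openin (top_of_set tangent_space) (chart ` S)"
proof -
  have h: "h ` T = S" "continuous_on T h" "\<And>t. t \<in> T \<Longrightarrow> k (h t) = t"
    using hom by (simp_all add: homeomorphism_def)
  have "openin (top_of_set tangent_space) ((chart \<circ> h) ` T)"
  proof (rule invariance_of_domain_subspaces[OF W(3,1) subspace_tangent_space W(2)])
    show "continuous_on T (chart \<circ> h)"
      by (rule continuous_on_compose[OF h(2) continuous_on_chart])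
    show "chart \<circ> h \<in> T \<rightarrow> tangent_space"
    proof
      fix t assume "t \<in> T"
      then have "h t \<in> variety A a \<alpha>" using h(1) S by blast
      then show "(chart \<circ> h) t \<in> tangent_space"
        by (simp add: chart_in_variety proj_in_tangent_space)
    qed
    have "inj_on h T" using h(3) by (rule inj_on_inverseI)
    moreover have "inj_on chart (h ` T)"
      using inj_on_subset[OF inj_on_chart] h(1) S by blast
    ultimately show "inj_on (chart \<circ> h) T" by (rule comp_inj_on)
  qed
  then show ?thesis unfolding image_comp[symmetric] h(1) .
qed

lemma tangent_ball_part_in_variety:
  assumes dim: "dim tangent_space \<le> local_dim (variety A a \<alpha>) x"
  obtains w1 \<epsilon> where "w1 \<in> tangent_space" "\<epsilon> > 0" "ball w1 \<epsilon> \<subseteq> ball (proj x) \<delta>"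
    "\<And>w. w \<in> tangent_space \<Longrightarrow> w \<in> ball w1 \<epsilon> \<Longrightarrow> chart_inv w \<in> variety A a \<alpha>"
proof -
  have "isCont chart x" using continuous_on_chart[of UNIV] by (simp add: continuous_on_eq_continuous_at)
  then obtain e1 where "e1 > 0" and e1: "\<And>y. dist y x < e1 \<Longrightarrow> dist (chart y) (chart x) < \<delta>/2"
    using delta_pos unfolding continuous_at_eps_delta by (metis half_gt_zero)
  have "min e1 \<rho> > 0" using \<open>e1 > 0\<close> rho_pos by simp
  then have "\<exists>S \<subseteq> variety A a \<alpha> \<inter> ball x (min e1 \<rho>). \<exists>(W::(real^'n) set) T. subspace W \<and>
      dim W = local_dim (variety A a \<alpha>) x \<and> openin (top_of_set W) T \<and> T \<noteq> {} \<and> T homeomorphic S"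
    using has_local_piece_local_dim[OF x_in_variety] by (simp add: has_local_piece_def)
  then obtain S and W :: "(real^'n) set" and T where S: "S \<subseteq> variety A a \<alpha> \<inter> ball x (min e1 \<rho>)"
      and W: "subspace W" "dim W = local_dim (variety A a \<alpha>) x"
      and T: "openin (top_of_set W) T" "T \<noteq> {}" "T homeomorphic S"
    by blast
  obtain h k where hom: "homeomorphism T S h k" using T(3) homeomorphic_def by blast
  have chart_x: "chart x = proj x" using x_in_variety by (rule chart_in_variety)
  have S_ball: "s \<in> ball x \<rho>" "chart s \<in> ball (proj x) (\<delta>/2)" if s: "s \<in> S" for s
  proof -
    have "dist s x < min e1 \<rho>" using s S by (auto simp: dist_commute)
    then show "s \<in> ball x \<rho>" "chart s \<in> ball (proj x) (\<delta>/2)"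
      using e1[of s] by (auto simp: dist_commute chart_x)
  qed
  have open_image: "openin (top_of_set tangent_space) (chart ` S)"
    using S dim W T(1) hom by (intro openin_chart_image) auto
  obtain s1 where "s1 \<in> S" using T(2) hom by (auto simp: homeomorphism_def)
  define w1 where "w1 = chart s1"
  have "w1 \<in> chart ` S" using \<open>s1 \<in> S\<close> by (simp add: w1_def)
  then obtain \<epsilon> where "\<epsilon> > 0"
      and \<epsilon>: "\<And>w'. w' \<in> tangent_space \<Longrightarrow> dist w' w1 < \<epsilon> \<Longrightarrow> w' \<in> chart ` S"
    using open_image unfolding openin_euclidean_subtopology_iff by meson
  have "w1 \<in> tangent_space"
    using open_image \<open>w1 \<in> chart ` S\<close> by (metis openin_imp_subset subsetD)
  have w1_ball: "dist (proj x) w1 < \<delta>/2" using S_ball(2)[OF \<open>s1 \<in> S\<close>] by (simp add: w1_def)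
  show thesis
  proof (rule that[OF \<open>w1 \<in> tangent_space\<close>])
    show "min \<epsilon> (\<delta>/2) > 0" using \<open>\<epsilon> > 0\<close> delta_pos by simp
    show "ball w1 (min \<epsilon> (\<delta>/2)) \<subseteq> ball (proj x) \<delta>"
    proof
      fix y assume "y \<in> ball w1 (min \<epsilon> (\<delta>/2))"
      then have "dist w1 y < \<delta>/2" by simp
      then show "y \<in> ball (proj x) \<delta>" using w1_ball dist_triangle[of "proj x" y w1] by simp
    qed
    show "chart_inv w' \<in> variety A a \<alpha>"
      if w': "w' \<in> tangent_space" "w' \<in> ball w1 (min \<epsilon> (\<delta>/2))" for w'
    proof -
      obtain s where s: "s \<in> S" "w' = chart s"
        using \<epsilon> w' by (auto simp: dist_commute)
      then have "chart_inv w' = s" using S_ball[OF s(1)] delta_pos by (simp add: chart_inv_chart)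
      then show ?thesis using s S by auto
    qed
  qed
qed

lemma tangent_ball_in_variety:
  assumes "dim tangent_space \<le> local_dim (variety A a \<alpha>) x"
    and "w \<in> tangent_space" "w \<in> ball (proj x) \<delta>"
  shows "chart_inv w \<in> variety A a \<alpha>"
proof -
  obtain w1 \<epsilon> where "w1 \<in> tangent_space" "\<epsilon> > 0" "ball w1 \<epsilon> \<subseteq> ball (proj x) \<delta>"
    "\<And>w. w \<in> tangent_space \<Longrightarrow> w \<in> ball w1 \<epsilon> \<Longrightarrow> chart_inv w \<in> variety A a \<alpha>"
    using tangent_ball_part_in_variety[OF assms(1)] by blast
  then show ?thesis using chart_inv_in_variety_extend assms(2,3) by blast
qed

section \<open>Covering a neighbourhood of x by the SDP-exact region\<close>

definition ed_param :: "real^'n \<Rightarrow> real^'n" where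
  "ed_param p = chart_inv (proj p)
     - (\<Sum>i\<in>UNIV. (grad i \<bullet> (p - x)) *\<^sub>R (A i *v chart_inv (proj p) + a i))"

lemma ed_param_x: "ed_param x = x"
  by (simp add: ed_param_def chart_inv_proj_x)

lemma has_derivative_chart_inv:
  obtains D where "(chart_inv has_derivative D) (at (proj x))" "\<And>h. h \<in> tangent_space \<Longrightarrow> D h = h"
proof
  define w0 where "w0 = of_real_vec (proj x)"
  have w0: "w0 \<in> ball (of_real_vec (proj x)) \<delta>" using delta_pos by (simp add: w0_def)
  have "\<psi> w0 = of_real_vec x"
    using psi_of_real_vec[of "proj x"] delta_pos by (simp add: w0_def chart_inv_proj_x)
  then show "Re_vec (\<psi>' w0 (of_real_vec h)) = h" if "h \<in> tangent_space" for h
    using psi'_left_inverse[OF w0, of "of_real_vec h"]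
    by (simp add: chart_complex_deriv_of_real_vec chart_deriv_tangent[OF that])
  have "((\<lambda>w. Re_vec (\<psi> (of_real_vec w))) has_derivative
      (\<lambda>h. Re_vec (\<psi>' w0 (of_real_vec h)))) (at (proj x))"
    by (rule has_derivative_compose[OF has_derivative_compose[OF
          bounded_linear_imp_has_derivative[OF bounded_linear_of_real_vec]]
          bounded_linear_imp_has_derivative[OF bounded_linear_Re_vec]])
      (use has_derivative_psi[OF w0] in \<open>simp add: w0_def\<close>)
  then show "(chart_inv has_derivative (\<lambda>h. Re_vec (\<psi>' w0 (of_real_vec h)))) (at (proj x))"
    by (simp add: chart_inv_def[abs_def])
qed

lemma has_derivative_ed_param:
  "(ed_param has_derivative (\<lambda>h. proj h - (\<Sum>i\<in>UNIV. (grad i \<bullet> h) *\<^sub>R grad i))) (at x)"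
proof -
  obtain D where D: "(chart_inv has_derivative D) (at (proj x))" "\<And>h. h \<in> tangent_space \<Longrightarrow> D h = h"
    by (rule has_derivative_chart_inv) blast
  have d1: "((\<lambda>p. chart_inv (proj p)) has_derivative (\<lambda>h. D (proj h))) (at x)"
    by (rule has_derivative_compose[OF bounded_linear_imp_has_derivative[OF bounded_linear_proj] D(1)])
  have "(ed_param has_derivative (\<lambda>h. D (proj h) - (\<Sum>i\<in>UNIV. (grad i \<bullet> (x - x)) *\<^sub>R
      (A i *v D (proj h) + 0) + (grad i \<bullet> h) *\<^sub>R (A i *v chart_inv (proj x) + a i)))) (at x)"
    unfolding ed_param_def[abs_def]
    by (intro has_derivative_diff d1 has_derivative_sum has_derivative_scaleR has_derivative_add
        has_derivative_const has_derivative_inner_right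
        bounded_linear.has_derivative[OF matrix_vector_mul_bounded_linear d1])
      (auto intro!: derivative_eq_intros)
  then show ?thesis
    by (simp add: D(2) proj_in_tangent_space chart_inv_proj_x grad_def)
qed

lemma small_multipliers:
  obtains e where "e > 0"
    "\<And>p. p \<in> ball x e \<Longrightarrow> proj p \<in> ball (proj x) \<delta>"
    "\<And>p. p \<in> ball x e \<Longrightarrow> pos_def (mat 1 - (\<Sum>i\<in>UNIV. (grad i \<bullet> (p - x)) *\<^sub>R A i))"
proof -
  obtain \<eta> where "\<eta> > 0" and \<eta>: "\<And>lam. (\<And>i. \<bar>lam i\<bar> < \<eta>) \<Longrightarrow>
      pos_def (mat 1 - (\<Sum>i\<in>UNIV. lam i *\<^sub>R A i))"
    using pos_def_identity_minus_small[of A, OF symmetric] by blast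
  have "isCont proj x" by (rule linear_continuous_at[OF bounded_linear_proj])
  then obtain e1 where "e1 > 0" and e1: "\<And>p. dist p x < e1 \<Longrightarrow> dist (proj p) (proj x) < \<delta>"
    using delta_pos unfolding continuous_at_eps_delta by metis
  define G where "G = (\<Sum>i\<in>UNIV. norm (grad i)) + 1"
  have "G > 0" by (simp add: G_def add_nonneg_pos sum_nonneg)
  show thesis
  proof (rule that[of "min e1 (\<eta> / G)"])
    show "min e1 (\<eta> / G) > 0" using \<open>e1 > 0\<close> \<open>\<eta> > 0\<close> \<open>G > 0\<close> by simp
    show "proj p \<in> ball (proj x) \<delta>" if "p \<in> ball x (min e1 (\<eta> / G))" for p
      using e1[of p] that by (simp add: dist_commute)
    show "pos_def (mat 1 - (\<Sum>i\<in>UNIV. (grad i \<bullet> (p - x)) *\<^sub>R A i))"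
      if p: "p \<in> ball x (min e1 (\<eta> / G))" for p
    proof (rule \<eta>)
      fix i
      have "norm (grad i) \<le> G"
        using member_le_sum[of i UNIV "\<lambda>i. norm (grad i)"] by (simp add: G_def)
      have "\<bar>grad i \<bullet> (p - x)\<bar> \<le> G * norm (p - x)"
        by (rule order_trans[OF Cauchy_Schwarz_ineq2])
          (simp add: \<open>norm (grad i) \<le> G\<close> mult_right_mono)
      also have "\<dots> < G * (\<eta> / G)"
        using p \<open>G > 0\<close> by (simp add: dist_norm norm_minus_commute field_simps)
      also have "\<dots> = \<eta>" using \<open>G > 0\<close> by simp
      finally show "\<bar>grad i \<bullet> (p - x)\<bar> < \<eta>" .
    qed
  qed
qed

lemma ed_param_in_ed_region:
  assumes dim: "dim tangent_space \<le> local_dim (variety A a \<alpha>) x"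
    and p: "proj p \<in> ball (proj x) \<delta>"
    and pos: "pos_def (mat 1 - (\<Sum>i\<in>UNIV. (grad i \<bullet> (p - x)) *\<^sub>R A i))"
  shows "ed_param p \<in> ed_region A a \<alpha>"
proof -
  define lam where "lam i = grad i \<bullet> (p - x)" for i
  have pd: "pos_def (mat 1 - (\<Sum>i\<in>UNIV. lam i *\<^sub>R A i))"
    using pos by (simp add: lam_def)
  have stationary: "- ed_param p - (\<Sum>i\<in>UNIV. lam i *\<^sub>R a i)
      + (mat 1 - (\<Sum>i\<in>UNIV. lam i *\<^sub>R A i)) *v chart_inv (proj p) = 0"
    by (simp add: ed_param_def lam_def[symmetric] matrix_vector_mult_diff_rdistrib
        matrix_vector_mult_sum_scaleR scaleR_add_right sum.distrib)
  have "chart_inv (proj p) \<in> variety A a \<alpha>"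
    using tangent_ball_in_variety[OF dim proj_in_tangent_space p] .
  then show ?thesis
    unfolding ed_region_def mem_Collect_eq
    by (rule bexI[rotated]) (rule exI[of _ lam], rule conjI[OF pd stationary])
qed

lemma interior_ed_param_image:
  assumes "e > 0" and e_proj: "\<And>p. p \<in> ball x e \<Longrightarrow> proj p \<in> ball (proj x) \<delta>"
  shows "x \<in> interior (ed_param ` ball x e)"
proof -
  define K where "K h = proj h - (\<Sum>i\<in>UNIV. (grad i \<bullet> h) *\<^sub>R grad i)" for h
  have der: "(ed_param has_derivative K) (at x)"
    unfolding K_def[abs_def] by (rule has_derivative_ed_param)
  then have "linear K" using has_derivative_linear by blast
  moreover have "inj K"
    unfolding linear_injective_0[OF \<open>linear K\<close>]
  proof (intro allI impI)
    fix h assume "K h = 0"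
    then have "proj h + (\<Sum>i\<in>UNIV. (-1 * (grad i \<bullet> h)) *\<^sub>R grad i) = 0"
      by (simp add: K_def sum_negf)
    then show "h = 0" by (rule proj_plus_grad_eq_0[rotated]) simp
  qed
  ultimately have "surj K" by (rule linear_inj_imp_surj)
  then obtain K' where K': "linear K'" "K \<circ> K' = id"
    using linear_surjective_right_inverse[OF \<open>linear K\<close>] by blast
  have chart_inv_proj: "continuous_on (ball x e) (\<lambda>p. chart_inv (proj p))"
    by (rule continuous_on_compose2[OF continuous_on_chart_inv
          linear_continuous_on[OF bounded_linear_proj]]) (use e_proj in auto)
  have "continuous_on (ball x e) (\<lambda>p. A i *v chart_inv (proj p))" for i
    by (rule continuous_on_compose2[OF linear_continuous_on[OF matrix_vector_mul_bounded_linear]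
          chart_inv_proj]) auto
  then have "continuous_on (ball x e) ed_param"
    unfolding ed_param_def[abs_def] by (intro continuous_intros chart_inv_proj)
  then have "ed_param x \<in> interior (ed_param ` ball x e)"
    by (rule sussmann_open_mapping[OF open_ball _ _ der _ K'(2) subset_refl])
      (use \<open>e > 0\<close> K'(1) in \<open>auto simp: linear_conv_bounded_linear\<close>)
  then show ?thesis by (simp add: ed_param_x)
qed

lemma ed_region_contains_nhd:
  assumes "dim tangent_space \<le> local_dim (variety A a \<alpha>) x"
  shows "\<exists>U. open U \<and> x \<in> U \<and> U \<subseteq> ed_region A a \<alpha>"
proof -
  obtain e where "e > 0" and e_proj: "\<And>p. p \<in> ball x e \<Longrightarrow> proj p \<in> ball (proj x) \<delta>"
      and e_pos_def: "\<And>p. p \<in> ball x e \<Longrightarrow>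
        pos_def (mat 1 - (\<Sum>i\<in>UNIV. (grad i \<bullet> (p - x)) *\<^sub>R A i))"
    by (rule small_multipliers) blast
  have "ed_param ` ball x e \<subseteq> ed_region A a \<alpha>"
    using ed_param_in_ed_region[OF assms e_proj e_pos_def] by blast
  moreover have "x \<in> interior (ed_param ` ball x e)"
    using \<open>e > 0\<close> e_proj by (rule interior_ed_param_image)
  ultimately show ?thesis
    by (intro exI[of _ "interior (ed_param ` ball x e)"]) (auto intro: interior_subset[THEN subsetD])
qed

end

context quad_chart
begin

lemma ed_region_contains_nhd_if_dim:
  assumes "dim tangent_space \<le> local_dim (variety A a \<alpha>) x"
  shows "\<exists>U. open U \<and> x \<in> U \<and> U \<subseteq> ed_region A a \<alpha>"
proof -
  obtain \<rho> \<delta> \<psi> \<psi>' where "quad_chart_inverse A a \<alpha> x B \<rho> \<delta> \<psi> \<psi>'"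
    by (rule quad_chart_inverse_exists)
  then interpret quad_chart_inverse A a \<alpha> x B \<rho> \<delta> \<psi> \<psi>' .
  show ?thesis using ed_region_contains_nhd assms .
qed

lemma rank_Jac: "rank (Jac A a \<alpha> x) = dim (span (range grad))"
proof -
  define D where "D h = (\<chi> i. 2 * (grad i \<bullet> h))" for h
  have "(fsys A a \<alpha> has_derivative D) (at x)"
    unfolding fsys_def[abs_def] D_def
    by (rule has_derivative_vec_componentwise) (simp add: grad_def has_derivative_quad[OF symmetric])
  then have "rank (Jac A a \<alpha> x) = rank (matrix D)"
    by (simp add: Jac_def jacobian_def frechet_derivative_at[symmetric] rank_transpose)
  also have "\<dots> = dim (rows (matrix D))" by (rule row_rank_def)
  also have "rows (matrix D) = range (\<lambda>i. 2 *\<^sub>R grad i)"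
    by (auto simp: rows_def row_def matrix_def D_def vec_eq_iff inner_axis mult.commute)
  also have "dim \<dots> = dim (span (range (\<lambda>i. 2 *\<^sub>R grad i)))" by simp
  also have "span (range (\<lambda>i. 2 *\<^sub>R grad i)) = span (range grad)"
  proof (subst span_eq, intro conjI)
    show "range (\<lambda>i. 2 *\<^sub>R grad i) \<subseteq> span (range grad)"
      by (auto intro: span_mul span_base)
    have "grad i = (1/2) *\<^sub>R (2 *\<^sub>R grad i)" for i by simp
    then show "range grad \<subseteq> span (range (\<lambda>i. 2 *\<^sub>R grad i))"
      by (metis (no_types, lifting) image_subset_iff rangeI span_base span_mul)
  qed
  finally show ?thesis .
qed

lemma dim_tangent_space: "dim tangent_space + dim (span (range grad)) = CARD('n)"
proof -
  have "{y \<in> UNIV. \<forall>z \<in> span (range grad). orthogonal z y} = tangent_space"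
  proof (intro set_eqI iffI)
    fix y assume "y \<in> {y \<in> UNIV. \<forall>z \<in> span (range grad). orthogonal z y}"
    then show "y \<in> tangent_space" by (auto simp: tangent_space_def orthogonal_def intro: span_base)
  next
    fix y assume y: "y \<in> tangent_space"
    have "orthogonal y z" if "z \<in> span (range grad)" for z
      by (rule orthogonal_to_span[OF that])
        (use y in \<open>auto simp: tangent_space_def orthogonal_def inner_commute\<close>)
    then show "y \<in> {y \<in> UNIV. \<forall>z \<in> span (range grad). orthogonal z y}"
      by (simp add: orthogonal_commute)
  qed
  then show ?thesis
    using dim_subspace_orthogonal_to_vectors[of "span (range grad)" UNIV] by simp
qed

end

theorem corollary4p2:
  fixes A :: "'m::finite \<Rightarrow> real^'n^'n" and a :: "'m \<Rightarrow> real^'n" and \<alpha> :: "'m \<Rightarrow> real"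
    and x :: "real^'n"
  assumes sym: "\<And>i. transpose (A i) = A i"
    and xV: "x \<in> variety A a \<alpha>"
    and regular: "rank (Jac A a \<alpha> x) = local_codim (variety A a \<alpha>) x"
  shows "\<exists>U. open U \<and> x \<in> U \<and> U \<subseteq> ed_region A a \<alpha>"
proof -
  obtain B where B: "pairwise orthogonal B" "\<And>x. x \<in> B \<Longrightarrow> norm x = 1" "independent B"
      "span B = span (range (\<lambda>i. A i *v x + a i))"
    by (rule orthonormal_basis_subspace[OF subspace_span]) blast
  have "finite B" using B(3) independent_imp_finite by blast
  interpret quad_chart A a \<alpha> x B
    by unfold_locales (use sym xV B \<open>finite B\<close> in auto)
  have "local_dim (variety A a \<alpha>) x \<le> CARD('n)"
    using has_local_piece_le_card[OF has_local_piece_local_dim[OF xV]] .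
  then have "dim tangent_space \<le> local_dim (variety A a \<alpha>) x"
    using regular rank_Jac dim_tangent_space by (simp add: local_codim_def)
  then show ?thesis by (rule ed_region_contains_nhd_if_dim)
qed

end
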